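(* Every CSNC ring is an NCSUC ring; that is, if every clean element of $R$ is strongly nil-clean, then every nil-clean element of $R$ is uniquely strongly clean.
   Context: All rings are associative with identity $1$. For a ring $R$, $\mathrm{Id}(R)$, $U(R)$, $\mathrm{Nil}(R)$ denote the sets of idempotents, units and nilpotent elements. An element $a\in R$ is clean if $a=e+u$ for some $e\in\mathrm{Id}(R)$, $u\in U(R)$; it is uniquely strongly clean if there is exactly one $e\in\mathrm{Id}(R)$ such that $a-e\in U(R)$ and $ae=ea$. An element $a$ is nil-clean if $a=e+q$ with $e\in \mathrm{Id}(R)$, $q\in\mathrm{Nil}(R)$, and strongly nil-clean if moreover $eq=qe$. A ring is CSNC if every clean element is strongly nil-clean, and NCSUC if every nil-clean element is uniquely strongly clean. *)

theory Defs
  imports Main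
begin

definition idem :: "'a::ring_1 \<Rightarrow> bool" where
  "idem e \<longleftrightarrow> e * e = e"

definition unit_el :: "'a::ring_1 \<Rightarrow> bool" where
  "unit_el u \<longleftrightarrow> (\<exists>v. u * v = 1 \<and> v * u = 1)"

definition nilp :: "'a::ring_1 \<Rightarrow> bool" where
  "nilp q \<longleftrightarrow> (\<exists>n. q ^ n = 0)"

definition clean :: "'a::ring_1 \<Rightarrow> bool" where
  "clean a \<longleftrightarrow> (\<exists>e u. idem e \<and> unit_el u \<and> a = e + u)"

definition uniquely_strongly_clean :: "'a::ring_1 \<Rightarrow> bool" where
  "uniquely_strongly_clean a \<longleftrightarrow> (\<exists>!e. idem e \<and> unit_el (a - e) \<and> a * e = e * a)"

definition nil_clean :: "'a::ring_1 \<Rightarrow> bool" where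
  "nil_clean a \<longleftrightarrow> (\<exists>e q. idem e \<and> nilp q \<and> a = e + q)"

definition strongly_nil_clean :: "'a::ring_1 \<Rightarrow> bool" where
  "strongly_nil_clean a \<longleftrightarrow> (\<exists>e q. idem e \<and> nilp q \<and> a = e + q \<and> e * q = q * e)"

definition CSNC :: "'a::ring_1 itself \<Rightarrow> bool" where
  "CSNC _ \<longleftrightarrow> (\<forall>a::'a. clean a \<longrightarrow> strongly_nil_clean a)"

definition NCSUC :: "'a::ring_1 itself \<Rightarrow> bool" where
  "NCSUC _ \<longleftrightarrow> (\<forall>a::'a. nil_clean a \<longrightarrow> uniquely_strongly_clean a)"

end

theory Submission
  imports Defs
begin

text \<open>Under CSNC, the clean element -1 is strongly nil-clean, which forces 2 to be nilpotent.
  For a nil-clean element a, the element a - 1 is clean, hence a - 1 = f + p with f idempotent,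
  p nilpotent and fp = pf; then a - f = 1 + p is a unit, and a - (1 - f) = 2f + p is nilpotent,
  so a^2 - a is nilpotent. Conversely, for any idempotent g commuting with a such that a - g is
  a unit, a - (1 - g) = (a - g)^-1 (a^2 - a) is nilpotent. Thus 1 - g and 1 - f are both
  idempotent parts of strongly nil-clean decompositions of a, and these are unique: an idempotent
  e with a - e nilpotent and commuting with a commutes with everything commuting with a, and
  the difference of two such commuting idempotents is a nilpotent element d with d^3 = d.\<close>

lemma power_mult_commuting:
  fixes x y :: "'a::monoid_mult"
  assumes "x * y = y * x"
  shows "(x * y) ^ n = x ^ n * y ^ n"
proof (induction n)
  case (Suc n)
  have "(x * y) ^ Suc n = x * (y * x ^ n) * y ^ n"
    by (simp add: Suc mult.assoc)
  also have "\<dots> = x ^ Suc n * y ^ Suc n"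
    by (simp add: power_commuting_commutes[OF assms, symmetric] mult.assoc)
  finally show ?case .
qed simp

lemma unit_el_mult:
  fixes u v :: "'a::ring_1"
  assumes "unit_el u" "unit_el v"
  shows "unit_el (u * v)"
proof -
  obtain u' v' where "u * u' = 1" "u' * u = 1" "v * v' = 1" "v' * v = 1"
    using assms unfolding unit_el_def by blast
  then have "(u * v) * (v' * u') = 1" "(v' * u') * (u * v) = 1"
    by (simp_all add: mult.assoc) (simp_all add: mult.assoc[symmetric])
  then show ?thesis
    unfolding unit_el_def by blast
qed

lemma unit_el_power:
  fixes u :: "'a::ring_1"
  assumes "unit_el u"
  shows "unit_el (u ^ n)"
  by (induction n) (auto simp: unit_el_def[of 1] intro: unit_el_mult assms)

lemma unit_el_uminus:
  fixes u :: "'a::ring_1"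
  assumes "unit_el u"
  shows "unit_el (- u)"
  using assms unfolding unit_el_def by (metis minus_mult_minus)

lemma unit_el_mult_cancel_right:
  fixes u y :: "'a::ring_1"
  assumes "unit_el u" "y * u = 0"
  shows "y = 0"
proof -
  obtain v where "u * v = 1"
    using assms unfolding unit_el_def by blast
  then have "y = y * u * v"
    by (simp add: mult.assoc)
  with assms show ?thesis
    by simp
qed

lemma inverse_commuting:
  fixes u v x :: "'a::ring_1"
  assumes "u * v = 1" "v * u = 1" "u * x = x * u"
  shows "v * x = x * v"
proof -
  have "v * x = v * (x * u) * v"
    by (simp add: assms(1) mult.assoc)
  also have "\<dots> = (v * u) * x * v"
    by (simp add: assms(3) mult.assoc)
  finally show ?thesis
    by (simp add: assms(2))
qed

lemma nilp_uminus:
  fixes x :: "'a::ring_1"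
  assumes "nilp x"
  shows "nilp (- x)"
proof -
  obtain n where "x ^ n = 0"
    using assms unfolding nilp_def by blast
  then have "(- x) ^ n = 0"
    by (simp add: power_minus[of x n])
  then show ?thesis
    unfolding nilp_def by blast
qed

lemma nilp_mult_commuting:
  fixes x y :: "'a::ring_1"
  assumes "x * y = y * x" "nilp x"
  shows "nilp (x * y)" "nilp (y * x)"
proof -
  obtain n where "x ^ n = 0"
    using assms(2) unfolding nilp_def by blast
  then have "(x * y) ^ n = 0"
    by (simp add: power_mult_commuting[OF assms(1)])
  then show "nilp (x * y)" "nilp (y * x)"
    unfolding nilp_def using assms(1) by auto
qed

text \<open>A binomial expansion without binomial coefficients: every power (x + y)^(i+j)
  lies in the right ideal generated by x^i and y^j.\<close>

lemma power_add_commuting_split: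
  fixes x y :: "'a::ring_1"
  assumes xy: "x * y = y * x"
  shows "\<exists>P Q. (x + y) ^ (i + j) = x ^ i * P + y ^ j * Q"
proof (induction "i + j" arbitrary: i j rule: less_induct)
  case less
  consider "i = 0" | "j = 0" | i' j' where "i = Suc i'" "j = Suc j'"
    by (meson not0_implies_Suc)
  then show ?case
  proof cases
    case 1
    then have "(x + y) ^ (i + j) = x ^ i * (x + y) ^ j + y ^ j * 0"
      by simp
    then show ?thesis
      by blast
  next
    case 2
    then have "(x + y) ^ (i + j) = x ^ i * 0 + y ^ j * (x + y) ^ i"
      by simp
    then show ?thesis
      by blast
  next
    case 3
    obtain P Q where PQ: "(x + y) ^ (i' + j) = x ^ i' * P + y ^ j * Q"
      using less[of i' j] 3 by auto
    obtain P' Q' where PQ': "(x + y) ^ (i + j') = x ^ i * P' + y ^ j' * Q'"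
      using less[of i j'] 3 by auto
    have yx: "y * x ^ k = x ^ k * y" "x * y ^ k = y ^ k * x" for k
      using power_commuting_commutes[of x y k] power_commuting_commutes[of y x k] xy by simp_all
    have "(x + y) ^ (i + j) = x * (x + y) ^ (i' + j) + y * (x + y) ^ (i + j')"
      using 3 by (simp add: distrib_right)
    also have "\<dots> = x ^ i * (P + y * P') + y ^ j * (x * Q + Q')"
    proof -
      have "x * (x ^ i' * P) = x ^ i * P" "y * (y ^ j' * Q') = y ^ j * Q'"
        using 3 by (simp_all add: mult.assoc)
      moreover have "x * (y ^ j * Q) = y ^ j * (x * Q)" "y * (x ^ i * P') = x ^ i * (y * P')"
        by (simp_all add: mult.assoc[symmetric] yx)
      ultimately show ?thesis
        unfolding PQ PQ' distrib_left by (simp add: add_ac)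
    qed
    finally show ?thesis
      by blast
  qed
qed

lemma nilp_add_commuting:
  fixes x y :: "'a::ring_1"
  assumes "x * y = y * x" "nilp x" "nilp y"
  shows "nilp (x + y)"
proof -
  obtain m n where "x ^ m = 0" "y ^ n = 0"
    using assms unfolding nilp_def by blast
  then show ?thesis
    using power_add_commuting_split[OF assms(1), of m n] unfolding nilp_def by auto
qed

lemma geometric_sum_mult:
  fixes q :: "'a::ring_1"
  shows "(1 - q) * (\<Sum>i<n. q ^ i) = 1 - q ^ n" "(\<Sum>i<n. q ^ i) * (1 - q) = 1 - q ^ n"
proof (induction n)
  case (Suc n)
  have "(1 - q) * (\<Sum>i<Suc n. q ^ i) = (1 - q) * (\<Sum>i<n. q ^ i) + (1 - q) * q ^ n"
    by (simp add: distrib_left)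
  also have "\<dots> = 1 - q ^ Suc n"
    using Suc(1) by (simp add: algebra_simps)
  finally show "(1 - q) * (\<Sum>i<Suc n. q ^ i) = 1 - q ^ Suc n" .
  have "(\<Sum>i<Suc n. q ^ i) * (1 - q) = (\<Sum>i<n. q ^ i) * (1 - q) + q ^ n * (1 - q)"
    by (simp add: distrib_right)
  also have "\<dots> = 1 - q ^ Suc n"
    using Suc(2) by (simp add: algebra_simps power_commutes)
  finally show "(\<Sum>i<Suc n. q ^ i) * (1 - q) = 1 - q ^ Suc n" .
qed simp_all

lemma unit_el_one_minus_nilp:
  fixes q :: "'a::ring_1"
  assumes "nilp q"
  shows "unit_el (1 - q)"
proof -
  obtain n where "q ^ n = 0"
    using assms unfolding nilp_def by blast
  then show ?thesis
    using geometric_sum_mult[of q n] unfolding unit_el_def by auto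
qed

lemma unit_el_one_plus_nilp:
  fixes q :: "'a::ring_1"
  assumes "nilp q"
  shows "unit_el (1 + q)"
  using unit_el_one_minus_nilp[OF nilp_uminus[OF assms]] by simp

lemma unit_el_nilp_minus_one:
  fixes q :: "'a::ring_1"
  assumes "nilp q"
  shows "unit_el (q - 1)"
  using unit_el_uminus[OF unit_el_one_minus_nilp[OF assms]] by simp

lemma nilp_intertwines_unit_eq_0:
  fixes q r y :: "'a::ring_1"
  assumes "nilp q" "unit_el r" and qy: "q * y = y * r"
  shows "y = 0"
proof -
  have power: "q ^ k * y = y * r ^ k" for k
  proof (induction k)
    case (Suc k)
    have "q ^ Suc k * y = q ^ k * (q * y)"
      by (simp only: power_Suc2 mult.assoc)
    also have "\<dots> = y * r ^ Suc k"
      by (simp only: qy Suc mult.assoc[symmetric] power_Suc2)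
    finally show ?case .
  qed simp
  obtain n where "q ^ n = 0"
    using assms(1) unfolding nilp_def by blast
  with power[of n] have "y * r ^ n = 0"
    by simp
  then show ?thesis
    using unit_el_mult_cancel_right[OF unit_el_power[OF assms(2)]] by blast
qed

lemma tripotent_nilp_eq_0:
  fixes d :: "'a::ring_1"
  assumes "d * (d * d) = d" "nilp d"
  shows "d = 0"
proof -
  have odd_power: "d * (d * d) ^ k = d" for k
    by (induction k) (simp_all add: mult.assoc[symmetric] assms(1), metis assms(1) mult.assoc)
  obtain n where "d ^ n = 0"
    using assms(2) unfolding nilp_def by blast
  then have "(d * d) ^ n = 0"
    by (simp add: power_mult_commuting)
  with odd_power[of n] show ?thesis
    by simp
qed

lemma idem_one_minus:
  fixes e :: "'a::ring_1"
  assumes "idem e"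
  shows "idem (1 - e)"
  using assms unfolding idem_def by (simp add: algebra_simps)

text \<open>The Peirce corners y = (1 - e) x e and y' = e x (1 - e) satisfy q y = y (1 + q) and
  q y' = y' (q - 1) for q = a - e, so both vanish; and x e - e x = y - y'.\<close>

lemma idem_commutes_with_commutant:
  fixes a e x :: "'a::ring_1"
  assumes "idem e" and ae: "a * e = e * a" and "nilp (a - e)" and xa: "x * a = a * x"
  shows "x * e = e * x"
proof -
  have ee: "e * e = e"
    using assms(1) unfolding idem_def .
  have ee': "e * (e * z) = e * z" for z
    by (simp add: ee mult.assoc[symmetric])
  have ea: "e * a = a * e" and ea': "e * (a * z) = a * (e * z)" for z
    by (simp_all add: ae mult.assoc[symmetric])
  have xa': "x * (a * z) = a * (x * z)" for z
    by (simp add: xa mult.assoc[symmetric])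
  note simps = algebra_simps ee ee' ea ea' xa xa'
  define y where "y = (1 - e) * x * e"
  define y' where "y' = e * x * (1 - e)"
  have "(a - e) * y = y * (1 + (a - e))"
    unfolding y_def by (simp add: simps)
  then have "y = 0"
    using nilp_intertwines_unit_eq_0 unit_el_one_plus_nilp \<open>nilp (a - e)\<close> by blast
  moreover have "(a - e) * y' = y' * ((a - e) - 1)"
    unfolding y'_def by (simp add: simps)
  then have "y' = 0"
    using nilp_intertwines_unit_eq_0 unit_el_nilp_minus_one \<open>nilp (a - e)\<close> by blast
  moreover have "x * e - e * x = y - y'"
    unfolding y_def y'_def by (simp add: simps)
  ultimately show ?thesis
    by simp
qed

lemma strongly_nil_clean_idem_unique:
  fixes a h1 h2 :: "'a::ring_1"
  assumes "idem h1" "idem h2" and a1: "a * h1 = h1 * a" and a2: "a * h2 = h2 * a"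
    and "nilp (a - h1)" "nilp (a - h2)"
  shows "h1 = h2"
proof -
  have h12: "h2 * h1 = h1 * h2"
    using idem_commutes_with_commutant[OF assms(1) a1 assms(5), of h2] a2 by simp
  have hh: "h1 * h1 = h1" "h2 * h2 = h2"
    using assms(1,2) unfolding idem_def by auto
  have hh': "h1 * (h1 * z) = h1 * z" "h2 * (h2 * z) = h2 * z" "h2 * (h1 * z) = h1 * (h2 * z)" for z
    by (simp_all add: hh h12 mult.assoc[symmetric])
  have "nilp ((a - h2) + - (a - h1))"
    using assms(5,6) by (intro nilp_add_commuting nilp_uminus) (simp_all add: algebra_simps a1 a2 h12)
  then have "nilp (h1 - h2)"
    by simp
  moreover have "(h1 - h2) * ((h1 - h2) * (h1 - h2)) = h1 - h2"
    by (simp add: algebra_simps hh hh' h12)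
  ultimately show ?thesis
    using tripotent_nilp_eq_0 by fastforce
qed

lemma idem_complement_factorization:
  fixes a f :: "'a::ring_1"
  assumes "idem f" "a * f = f * a"
  shows "(a - f) * (a - (1 - f)) = a * a - a"
  using assms unfolding idem_def by (simp add: algebra_simps)

lemma strongly_clean_idem_complement_nilp:
  fixes a g :: "'a::ring_1"
  assumes "idem g" "unit_el (a - g)" and ag: "a * g = g * a" and "nilp (a * a - a)"
  shows "nilp (a - (1 - g))"
proof -
  obtain v where v: "(a - g) * v = 1" "v * (a - g) = 1"
    using assms(2) unfolding unit_el_def by blast
  have "v * a = a * v"
    using inverse_commuting[OF v] by (simp add: algebra_simps ag)
  then have "(a * a - a) * v = v * (a * a - a)"
    by (simp add: right_diff_distrib left_diff_distrib mult.assoc flip: mult.assoc[of v])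
  then have "nilp (v * (a * a - a))"
    using nilp_mult_commuting(2) \<open>nilp (a * a - a)\<close> by blast
  moreover have "v * (a * a - a) = a - (1 - g)"
    unfolding idem_complement_factorization[OF assms(1) ag, symmetric]
    by (simp add: mult.assoc[symmetric] v(2))
  ultimately show ?thesis
    by simp
qed

lemma CSNC_nilp_two:
  assumes "CSNC TYPE('a::ring_1)"
  shows "nilp (2::'a)"
proof -
  have "unit_el (-1::'a)"
    unfolding unit_el_def by (rule exI[of _ "-1"]) simp
  then have "clean (-1::'a)"
    unfolding clean_def idem_def by force
  then obtain e q :: 'a where "idem e" "nilp q" and decomp: "-1 = e + q"
    using assms unfolding CSNC_def strongly_nil_clean_def by blast
  have one_plus_e: "1 + e = - q"
    using arg_cong[OF decomp, of "\<lambda>t. 1 + t - q"] by (simp add: algebra_simps)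
  then have "nilp (1 + e)"
    using nilp_uminus[OF \<open>nilp q\<close>] by simp
  moreover have "(1 + e) * (1 - e) = (1 - e) * 1"
    using \<open>idem e\<close> unfolding idem_def by (simp add: algebra_simps)
  ultimately have "1 - e = 0"
    using nilp_intertwines_unit_eq_0 unit_el_def by (metis mult_1)
  then have "2 = - q"
    using one_plus_e by simp
  then show ?thesis
    using nilp_uminus[OF \<open>nilp q\<close>] by simp
qed

lemma CSNC_nil_clean_decomposition:
  assumes "CSNC TYPE('a::ring_1)" and "nil_clean (a::'a)"
  obtains f where "idem f" "unit_el (a - f)" "a * f = f * a" "nilp (a - (1 - f))"
proof -
  obtain e q where "idem e" "nilp q" "a = e + q"
    using assms(2) unfolding nil_clean_def by blast
  then have "clean (a - 1)"
    unfolding clean_def using unit_el_nilp_minus_one by fastforce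
  then obtain f p where "idem f" "nilp p" "a - 1 = f + p" and fp: "f * p = p * f"
    using assms(1) unfolding CSNC_def strongly_nil_clean_def by blast
  then have a: "a = f + (1 + p)"
    by (simp add: algebra_simps)
  have "nilp (2 * f)"
    using nilp_mult_commuting(1)[OF _ CSNC_nilp_two[OF assms(1)], of f] by (simp add: mult_2 mult_2_right)
  moreover have "(2 * f) * p = p * (2 * f)"
    by (simp add: mult_2 mult_2_right distrib_left distrib_right fp)
  ultimately have "nilp (2 * f + p)"
    using nilp_add_commuting \<open>nilp p\<close> by blast
  moreover have "a - (1 - f) = 2 * f + p"
    using a by (simp add: algebra_simps mult_2)
  moreover have "a - f = 1 + p" "a * f = f * a"
    using a fp by (simp_all add: algebra_simps)
  ultimately show thesis
    using that \<open>idem f\<close> unit_el_one_plus_nilp[OF \<open>nilp p\<close>] by simp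
qed

theorem mainTheorem15:
  assumes "CSNC TYPE('a::ring_1)"
  shows "NCSUC TYPE('a::ring_1)"
  unfolding NCSUC_def uniquely_strongly_clean_def
proof (intro allI impI)
  fix a :: 'a
  assume "nil_clean a"
  then obtain f where f: "idem f" "unit_el (a - f)" "a * f = f * a" and nf: "nilp (a - (1 - f))"
    using CSNC_nil_clean_decomposition[OF assms] by blast
  have "(a - (1 - f)) * (a - f) = (a - f) * (a - (1 - f))"
    by (simp add: algebra_simps f(3))
  then have "nilp (a * a - a)"
    using nilp_mult_commuting(2)[OF _ nf] idem_complement_factorization[OF f(1,3)] by metis
  show "\<exists>!g. idem g \<and> unit_el (a - g) \<and> a * g = g * a"
  proof (rule ex1I)
    show "idem f \<and> unit_el (a - f) \<and> a * f = f * a"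
      using f by blast
  next
    fix g
    assume g: "idem g \<and> unit_el (a - g) \<and> a * g = g * a"
    then have "nilp (a - (1 - g))"
      using strongly_clean_idem_complement_nilp \<open>nilp (a * a - a)\<close> by blast
    moreover have "a * (1 - g) = (1 - g) * a" "a * (1 - f) = (1 - f) * a"
      using g f(3) by (simp_all add: algebra_simps)
    ultimately have "1 - g = 1 - f"
      using strongly_nil_clean_idem_unique idem_one_minus g f(1) nf by blast
    then show "g = f"
      by simp
  qed
qed

end
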